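(* Let $(D,\prec,\succ,\alpha)$ and $(D',\prec',\succ',\alpha')$ be Hom-dendriform algebras, let $(D',\prec_l,\succ_l,\prec_r,\succ_r,\alpha')$ be an action of $D$ on $D'$, and let $T:D'\to D$ be a homomorphic relative averaging operator with respect to this action. Define on $D'$: $u\prec_\perp v=u\prec' v$, $u\succ_\perp v=u\succ' v$, $u\prec^T_\vdash v=Tu\prec_l v$, $u\prec^T_\dashv v=u\prec_r Tv$, $u\succ^T_\vdash v=Tu\succ_l v$, $u\succ^T_\dashv v=u\succ_r Tv$. Then $(D',\prec_\perp,\succ_\perp,\prec^T_\vdash,\prec^T_\dashv,\succ^T_\vdash,\succ^T_\dashv,\alpha')$ is a Hom-six-dendriform algebra.
   Context: All vector spaces are over a field of characteristic zero. A Hom-dendriform algebra is $(D,\prec,\succ,\alpha)$ with $\prec,\succ$ bilinear and $\alpha$ linear such that for all $x,y,z$: $\alpha(x)\prec(y\prec z+y\succ z)=(x\prec y)\prec\alpha(z)$; $\alpha(x)\succ(y\prec z)=(x\succ y)\prec\alpha(z)$; $\alpha(x)\succ(y\succ z)=(x\prec y+x\succ y)\succ\alpha(z)$. A representation of $(D,\prec,\succ,\alpha)$ on $V$ is a linear $\beta:V\to V$ with bilinear $\prec_l,\succ_l:D\times V\to V$, $\prec_r,\succ_r:V\times D\to V$ such that for all $x,y\in D$, $m\in V$: $(x\prec y)\prec_l\beta(m)=\alpha(x)\prec_l(y\prec_l m+y\succ_l m)$; $(x\succ y)\prec_l\beta(m)=\alpha(x)\succ_l(y\prec_l m)$; $\alpha(x)\succ_l(y\succ_l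 m)=(x\prec y+x\succ y)\succ_l\beta(m)$; $\beta(m)\prec_r(x\prec y+x\succ y)=(m\prec_r x)\prec_r\alpha(y)$; $\beta(m)\succ_r(x\prec y)=(m\succ_r x)\prec_r\alpha(y)$; $(m\prec_r x+m\succ_r x)\succ_r\alpha(y)=\beta(m)\succ_r(x\succ y)$; $(x\prec_l m)\prec_r\alpha(y)=\alpha(x)\prec_l(m\prec_r y+m\succ_r y)$; $(x\succ_l m)\prec_r\alpha(y)=\alpha(x)\succ_l(m\prec_r y)$; $(x\prec_l m+x\succ_l m)\succ_r\alpha(y)=\alpha(x)\succ_l(m\succ_r y)$. An action of $D$ on $D'$ is a representation $(D',\prec_l,\succ_l,\prec_r,\succ_r,\alpha')$ of $D$ (with $\beta=\alpha'$) such that for all $x,y,z\in D$, $u,v,w\in D'$: $(x\prec_l v)\prec'\alpha'(w)=\alpha(x)\prec_l(v\prec' w+v\succ' w)$; $(x\succ_l v)\prec'\alpha'(w)=\alpha(x)\succ_l(v\prec' w)$; $\alpha(x)\succ_l(v\succ' w)=(x\prec_l v+x\succ_l v)\succ'\alpha'(w)$; $(u\prec_r y)\prec'\alpha'(w)=\alpha'(u)\prec'(y\prec_l w+y\succ_l w)$; $(u\succ_r y)\prec'\alpha'(w)=\alpha'(u)\succ'(y\prec_l w)$; $\alpha'(u)\succ'(y\succ_l w)=(u\prec_r y+u\succ_r y)\succ'\alpha'(w)$; $(u\prec' v)\prec_r\alpha(z)=\alpha'(u)\prec'(v\prec_r z+v\succ_r z)$; $(u\succ' v)\prec_r\alpha(z)=\alpha'(u)\succ'(v\prec_r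 z)$; $\alpha'(u)\succ'(v\succ_r z)=(u\prec' v+u\succ' v)\succ_r\alpha(z)$. A homomorphic relative averaging operator is a linear $T:D'\to D$ such that $Tu\prec Tv=T(Tu\prec_l v)=T(u\prec_r Tv)$ and $Tu\succ Tv=T(Tu\succ_l v)=T(u\succ_r Tv)$ for all $u,v\in D'$, $T\circ\alpha'=\alpha\circ T$, and $T(u\prec' v)=Tu\prec Tv$, $T(u\succ' v)=Tu\succ Tv$ for all $u,v\in D'$. A Hom-quadri-dendriform algebra is $(E,\prec_\vdash,\prec_\dashv,\succ_\vdash,\succ_\dashv,\gamma)$ with four bilinear operations and $\gamma$ linear such that for all $x,y,z$: (Q1) $(x\prec_\vdash y)\prec_\vdash\gamma(z)=(x\prec_\dashv y)\prec_\vdash\gamma(z)=\gamma(x)\prec_\vdash(y\prec_\vdash z+y\succ_\vdash z)$; (Q2) $(x\succ_\vdash y)\prec_\vdash\gamma(z)=(x\succ_\dashv y)\prec_\vdash\gamma(z)=\gamma(x)\succ_\vdash(y\prec_\vdash z)$; (Q3) $\gamma(x)\succ_\vdash(y\succ_\vdash z)=(x\prec_\vdash y+x\succ_\vdash y)\succ_\vdash\gamma(z)=(x\prec_\dashv y+x\succ_\dashv y)\succ_\vdash\gamma(z)$; (Q4) $\gamma(x)\succ_\vdash(y\succ_\vdash z)=(x\prec_\dashv y+x\succ_\vdash y)\succ_\vdash\gamma(z)=(x\prec_\vdash y+x\succ_\dashv y)\succ_\vdash\gamma(z)$; (Q5) $(x\prec_\vdash y)\prec_\dashv\gamma(z)=\gamma(x)\prec_\vdash(y\prec_\dashv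 z+y\succ_\dashv z)$; (Q6) $(x\succ_\vdash y)\prec_\dashv\gamma(z)=\gamma(x)\succ_\vdash(y\prec_\dashv z)$; (Q7) $\gamma(x)\succ_\vdash(y\succ_\dashv z)=(x\prec_\vdash y+x\succ_\vdash y)\succ_\dashv\gamma(z)$; (Q8) $(x\prec_\dashv y)\prec_\dashv\gamma(z)=\gamma(x)\prec_\dashv(y\prec_\vdash z+y\succ_\vdash z)=\gamma(x)\prec_\dashv(y\prec_\dashv z+y\succ_\dashv z)$; (Q9) $(x\prec_\dashv y)\prec_\dashv\gamma(z)=\gamma(x)\prec_\dashv(y\prec_\vdash z+y\succ_\dashv z)=\gamma(x)\prec_\dashv(y\prec_\dashv z+y\succ_\vdash z)$; (Q10) $(x\succ_\dashv y)\prec_\dashv\gamma(z)=\gamma(x)\succ_\dashv(y\prec_\vdash z)=\gamma(x)\succ_\dashv(y\prec_\dashv z)$; (Q11) $\gamma(x)\succ_\dashv(y\succ_\vdash z)=\gamma(x)\succ_\dashv(y\succ_\dashv z)=(x\prec_\dashv y+x\succ_\dashv y)\succ_\dashv\gamma(z)$. A Hom-six-dendriform algebra is $(E,\prec_\perp,\succ_\perp,\prec_\vdash,\prec_\dashv,\succ_\vdash,\succ_\dashv,\gamma)$ such that $(E,\prec_\perp,\succ_\perp,\gamma)$ is Hom-dendriform, $(E,\prec_\vdash,\prec_\dashv,\succ_\vdash,\succ_\dashv,\gamma)$ is Hom-quadri-dendriform, and for all $x,y,z$: (S1) $(x\prec_\vdash y)\prec_\perp\gamma(z)=\gamma(x)\prec_\vdash(y\prec_\perp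 z+y\succ_\perp z)$; (S2) $(x\succ_\vdash y)\prec_\perp\gamma(z)=\gamma(x)\succ_\vdash(y\prec_\perp z)$; (S3) $\gamma(x)\succ_\vdash(y\succ_\perp z)=(x\prec_\vdash y+x\succ_\vdash y)\succ_\perp\gamma(z)$; (S4) $(x\prec_\dashv y)\prec_\perp\gamma(z)=\gamma(x)\prec_\perp(y\prec_\vdash z+y\succ_\vdash z)$; (S5) $(x\succ_\dashv y)\prec_\perp\gamma(z)=\gamma(x)\succ_\perp(y\prec_\vdash z)$; (S6) $\gamma(x)\succ_\perp(y\succ_\vdash z)=(x\prec_\dashv y+x\succ_\dashv y)\succ_\perp\gamma(z)$; (S7) $(x\prec_\perp y)\prec_\dashv\gamma(z)=\gamma(x)\prec_\perp(y\prec_\dashv z+y\succ_\dashv z)$; (S8) $(x\succ_\perp y)\prec_\dashv\gamma(z)=\gamma(x)\succ_\perp(y\prec_\dashv z)$; (S9) $\gamma(x)\succ_\perp(y\succ_\dashv z)=(x\prec_\perp y+x\succ_\perp y)\succ_\dashv\gamma(z)$; (S10) $(x\prec_\perp y)\prec_\vdash\gamma(z)=(x\prec_\vdash y)\prec_\vdash\gamma(z)=(x\prec_\dashv y)\prec_\vdash\gamma(z)$; (S11) $(x\succ_\perp y)\prec_\vdash\gamma(z)=(x\succ_\vdash y)\prec_\vdash\gamma(z)=(x\succ_\dashv y)\prec_\vdash\gamma(z)$; (S12) $(x\prec_\perp y)\succ_\vdash\gamma(z)=(x\prec_\vdash y)\succ_\vdash\gamma(z)=(x\prec_\dashv y)\succ_\vdash\gamma(z)$;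 (S13) $(x\succ_\perp y)\succ_\vdash\gamma(z)=(x\succ_\vdash y)\succ_\vdash\gamma(z)=(x\succ_\dashv y)\succ_\vdash\gamma(z)$; (S14) $\gamma(x)\prec_\dashv(y\prec_\perp z)=\gamma(x)\prec_\dashv(y\prec_\vdash z)=\gamma(x)\prec_\dashv(y\prec_\dashv z)$; (S15) $\gamma(x)\succ_\dashv(y\prec_\perp z)=\gamma(x)\succ_\dashv(y\prec_\vdash z)=\gamma(x)\succ_\dashv(y\prec_\dashv z)$; (S16) $\gamma(x)\succ_\dashv(y\succ_\perp z)=\gamma(x)\succ_\dashv(y\succ_\vdash z)=\gamma(x)\succ_\dashv(y\succ_\dashv z)$; (S17) $\gamma(x)\prec_\dashv(y\succ_\perp z)=\gamma(x)\prec_\dashv(y\succ_\vdash z)=\gamma(x)\prec_\dashv(y\succ_\dashv z)$. *)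

theory Defs
  imports Complex_Main
begin

text \<open>Vector spaces over a field k of characteristic zero are modelled by a type
  'v :: ab_group_add together with a scalar multiplication s :: 'k => 'v => 'v
  satisfying the locale vector_space s, where 'k :: field_char_0.\<close>

definition bilin ::
  "('a::field \<Rightarrow> 'u::ab_group_add \<Rightarrow> 'u) \<Rightarrow> ('a \<Rightarrow> 'v::ab_group_add \<Rightarrow> 'v)
   \<Rightarrow> ('a \<Rightarrow> 'w::ab_group_add \<Rightarrow> 'w) \<Rightarrow> ('u \<Rightarrow> 'v \<Rightarrow> 'w) \<Rightarrow> bool" where
  "bilin s1 s2 s3 f \<longleftrightarrow> (\<forall>x. Vector_Spaces.linear s2 s3 (f x)) \<and> (\<forall>y. Vector_Spaces.linear s1 s3 (\<lambda>x. f x y))"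

definition hom_dendriform ::
  "('k::field \<Rightarrow> 'd::ab_group_add \<Rightarrow> 'd) \<Rightarrow> ('d \<Rightarrow> 'd \<Rightarrow> 'd) \<Rightarrow> ('d \<Rightarrow> 'd \<Rightarrow> 'd)
   \<Rightarrow> ('d \<Rightarrow> 'd) \<Rightarrow> bool" where
  "hom_dendriform s prec succ alpha \<longleftrightarrow>
     bilin s s s prec \<and> bilin s s s succ \<and> Vector_Spaces.linear s s alpha \<and>
     (\<forall>x y z.
        prec (alpha x) (prec y z + succ y z) = prec (prec x y) (alpha z) \<and>
        succ (alpha x) (prec y z) = prec (succ x y) (alpha z) \<and>
        succ (alpha x) (succ y z) = succ (prec x y + succ x y) (alpha z))"

definition hom_dend_rep ::
  "('k::field \<Rightarrow> 'd::ab_group_add \<Rightarrow> 'd) \<Rightarrow> ('k \<Rightarrow> 'v::ab_group_add \<Rightarrow> 'v)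
   \<Rightarrow> ('d \<Rightarrow> 'd \<Rightarrow> 'd) \<Rightarrow> ('d \<Rightarrow> 'd \<Rightarrow> 'd) \<Rightarrow> ('d \<Rightarrow> 'd)
   \<Rightarrow> ('d \<Rightarrow> 'v \<Rightarrow> 'v) \<Rightarrow> ('d \<Rightarrow> 'v \<Rightarrow> 'v) \<Rightarrow> ('v \<Rightarrow> 'd \<Rightarrow> 'v) \<Rightarrow> ('v \<Rightarrow> 'd \<Rightarrow> 'v)
   \<Rightarrow> ('v \<Rightarrow> 'v) \<Rightarrow> bool" where
  "hom_dend_rep sD sV prec succ alpha pl sl pr sr beta \<longleftrightarrow>
     bilin sD sV sV pl \<and> bilin sD sV sV sl \<and> bilin sV sD sV pr \<and> bilin sV sD sV sr \<and>
     Vector_Spaces.linear sV sV beta \<and>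
     (\<forall>x y m.
        pl (prec x y) (beta m) = pl (alpha x) (pl y m + sl y m) \<and>
        pl (succ x y) (beta m) = sl (alpha x) (pl y m) \<and>
        sl (alpha x) (sl y m) = sl (prec x y + succ x y) (beta m) \<and>
        pr (beta m) (prec x y + succ x y) = pr (pr m x) (alpha y) \<and>
        sr (beta m) (prec x y) = pr (sr m x) (alpha y) \<and>
        sr (pr m x + sr m x) (alpha y) = sr (beta m) (succ x y) \<and>
        pr (pl x m) (alpha y) = pl (alpha x) (pr m y + sr m y) \<and>
        pr (sl x m) (alpha y) = sl (alpha x) (pr m y) \<and>
        sr (pl x m + sl x m) (alpha y) = sl (alpha x) (sr m y))"

definition hom_dend_action ::
  "('k::field \<Rightarrow> 'd::ab_group_add \<Rightarrow> 'd) \<Rightarrow> ('k \<Rightarrow> 'e::ab_group_add \<Rightarrow> 'e)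
   \<Rightarrow> ('d \<Rightarrow> 'd \<Rightarrow> 'd) \<Rightarrow> ('d \<Rightarrow> 'd \<Rightarrow> 'd) \<Rightarrow> ('d \<Rightarrow> 'd)
   \<Rightarrow> ('e \<Rightarrow> 'e \<Rightarrow> 'e) \<Rightarrow> ('e \<Rightarrow> 'e \<Rightarrow> 'e) \<Rightarrow> ('e \<Rightarrow> 'e)
   \<Rightarrow> ('d \<Rightarrow> 'e \<Rightarrow> 'e) \<Rightarrow> ('d \<Rightarrow> 'e \<Rightarrow> 'e) \<Rightarrow> ('e \<Rightarrow> 'd \<Rightarrow> 'e) \<Rightarrow> ('e \<Rightarrow> 'd \<Rightarrow> 'e)
   \<Rightarrow> bool" where
  "hom_dend_action sD sE prec succ alpha prec' succ' alpha' pl sl pr sr \<longleftrightarrow>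
     hom_dend_rep sD sE prec succ alpha pl sl pr sr alpha' \<and>
     (\<forall>x y z u v w.
        prec' (pl x v) (alpha' w) = pl (alpha x) (prec' v w + succ' v w) \<and>
        prec' (sl x v) (alpha' w) = sl (alpha x) (prec' v w) \<and>
        sl (alpha x) (succ' v w) = succ' (pl x v + sl x v) (alpha' w) \<and>
        prec' (pr u y) (alpha' w) = prec' (alpha' u) (pl y w + sl y w) \<and>
        prec' (sr u y) (alpha' w) = succ' (alpha' u) (pl y w) \<and>
        succ' (alpha' u) (sl y w) = succ' (pr u y + sr u y) (alpha' w) \<and>
        pr (prec' u v) (alpha z) = prec' (alpha' u) (pr v z + sr v z) \<and>
        pr (succ' u v) (alpha z) = succ' (alpha' u) (pr v z) \<and>
        succ' (alpha' u) (sr v z) = sr (prec' u v + succ' u v) (alpha z))"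

definition hom_rel_avg_op ::
  "('k::field \<Rightarrow> 'd::ab_group_add \<Rightarrow> 'd) \<Rightarrow> ('k \<Rightarrow> 'e::ab_group_add \<Rightarrow> 'e)
   \<Rightarrow> ('d \<Rightarrow> 'd \<Rightarrow> 'd) \<Rightarrow> ('d \<Rightarrow> 'd \<Rightarrow> 'd) \<Rightarrow> ('d \<Rightarrow> 'd)
   \<Rightarrow> ('e \<Rightarrow> 'e \<Rightarrow> 'e) \<Rightarrow> ('e \<Rightarrow> 'e \<Rightarrow> 'e) \<Rightarrow> ('e \<Rightarrow> 'e)
   \<Rightarrow> ('d \<Rightarrow> 'e \<Rightarrow> 'e) \<Rightarrow> ('d \<Rightarrow> 'e \<Rightarrow> 'e) \<Rightarrow> ('e \<Rightarrow> 'd \<Rightarrow> 'e) \<Rightarrow> ('e \<Rightarrow> 'd \<Rightarrow> 'e)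
   \<Rightarrow> ('e \<Rightarrow> 'd) \<Rightarrow> bool" where
  "hom_rel_avg_op sD sE prec succ alpha prec' succ' alpha' pl sl pr sr T \<longleftrightarrow>
     Vector_Spaces.linear sE sD T \<and>
     (\<forall>u v.
        prec (T u) (T v) = T (pl (T u) v) \<and> prec (T u) (T v) = T (pr u (T v)) \<and>
        succ (T u) (T v) = T (sl (T u) v) \<and> succ (T u) (T v) = T (sr u (T v))) \<and>
     (\<forall>u. T (alpha' u) = alpha (T u)) \<and>
     (\<forall>u v. T (prec' u v) = prec (T u) (T v) \<and> T (succ' u v) = succ (T u) (T v))"

text \<open>Hom-quadri-dendriform algebra; argument order: pv (prec_vdash), pd (prec_dashv),
  sv (succ_vdash), sd (succ_dashv), gamma.\<close>
definition hom_quadri_dendriform ::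
  "('k::field \<Rightarrow> 'e::ab_group_add \<Rightarrow> 'e) \<Rightarrow> ('e \<Rightarrow> 'e \<Rightarrow> 'e) \<Rightarrow> ('e \<Rightarrow> 'e \<Rightarrow> 'e)
   \<Rightarrow> ('e \<Rightarrow> 'e \<Rightarrow> 'e) \<Rightarrow> ('e \<Rightarrow> 'e \<Rightarrow> 'e) \<Rightarrow> ('e \<Rightarrow> 'e) \<Rightarrow> bool" where
  "hom_quadri_dendriform s pv pd sv sd g \<longleftrightarrow>
     bilin s s s pv \<and> bilin s s s pd \<and> bilin s s s sv \<and> bilin s s s sd \<and> Vector_Spaces.linear s s g \<and>
     (\<forall>x y z.
        \<comment> \<open>Q1\<close>
        pv (pv x y) (g z) = pv (pd x y) (g z) \<and>
        pv (pd x y) (g z) = pv (g x) (pv y z + sv y z) \<and>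
        \<comment> \<open>Q2\<close>
        pv (sv x y) (g z) = pv (sd x y) (g z) \<and>
        pv (sd x y) (g z) = sv (g x) (pv y z) \<and>
        \<comment> \<open>Q3\<close>
        sv (g x) (sv y z) = sv (pv x y + sv x y) (g z) \<and>
        sv (pv x y + sv x y) (g z) = sv (pd x y + sd x y) (g z) \<and>
        \<comment> \<open>Q4\<close>
        sv (g x) (sv y z) = sv (pd x y + sv x y) (g z) \<and>
        sv (pd x y + sv x y) (g z) = sv (pv x y + sd x y) (g z) \<and>
        \<comment> \<open>Q5\<close>
        pd (pv x y) (g z) = pv (g x) (pd y z + sd y z) \<and>
        \<comment> \<open>Q6\<close>
        pd (sv x y) (g z) = sv (g x) (pd y z) \<and>
        \<comment> \<open>Q7\<close>
        sv (g x) (sd y z) = sd (pv x y + sv x y) (g z) \<and>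
        \<comment> \<open>Q8\<close>
        pd (pd x y) (g z) = pd (g x) (pv y z + sv y z) \<and>
        pd (g x) (pv y z + sv y z) = pd (g x) (pd y z + sd y z) \<and>
        \<comment> \<open>Q9\<close>
        pd (pd x y) (g z) = pd (g x) (pv y z + sd y z) \<and>
        pd (g x) (pv y z + sd y z) = pd (g x) (pd y z + sv y z) \<and>
        \<comment> \<open>Q10\<close>
        pd (sd x y) (g z) = sd (g x) (pv y z) \<and>
        sd (g x) (pv y z) = sd (g x) (pd y z) \<and>
        \<comment> \<open>Q11\<close>
        sd (g x) (sv y z) = sd (g x) (sd y z) \<and>
        sd (g x) (sd y z) = sd (pd x y + sd x y) (g z))"

text \<open>Hom-six-dendriform algebra; argument order: pp (prec_perp), sp (succ_perp),
  pv, pd, sv, sd, gamma.\<close>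
definition hom_six_dendriform ::
  "('k::field \<Rightarrow> 'e::ab_group_add \<Rightarrow> 'e) \<Rightarrow> ('e \<Rightarrow> 'e \<Rightarrow> 'e) \<Rightarrow> ('e \<Rightarrow> 'e \<Rightarrow> 'e)
   \<Rightarrow> ('e \<Rightarrow> 'e \<Rightarrow> 'e) \<Rightarrow> ('e \<Rightarrow> 'e \<Rightarrow> 'e) \<Rightarrow> ('e \<Rightarrow> 'e \<Rightarrow> 'e) \<Rightarrow> ('e \<Rightarrow> 'e \<Rightarrow> 'e)
   \<Rightarrow> ('e \<Rightarrow> 'e) \<Rightarrow> bool" where
  "hom_six_dendriform s pp sp pv pd sv sd g \<longleftrightarrow>
     hom_dendriform s pp sp g \<and> hom_quadri_dendriform s pv pd sv sd g \<and>
     (\<forall>x y z.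
        pp (pv x y) (g z) = pv (g x) (pp y z + sp y z) \<and>
        pp (sv x y) (g z) = sv (g x) (pp y z) \<and>
        sv (g x) (sp y z) = sp (pv x y + sv x y) (g z) \<and>
        pp (pd x y) (g z) = pp (g x) (pv y z + sv y z) \<and>
        pp (sd x y) (g z) = sp (g x) (pv y z) \<and>
        sp (g x) (sv y z) = sp (pd x y + sd x y) (g z) \<and>
        pd (pp x y) (g z) = pp (g x) (pd y z + sd y z) \<and>
        pd (sp x y) (g z) = sp (g x) (pd y z) \<and>
        sp (g x) (sd y z) = sd (pp x y + sp x y) (g z) \<and>
        \<comment> \<open>S10\<close>
        pv (pp x y) (g z) = pv (pv x y) (g z) \<and> pv (pv x y) (g z) = pv (pd x y) (g z) \<and>
        \<comment> \<open>S11\<close>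
        pv (sp x y) (g z) = pv (sv x y) (g z) \<and> pv (sv x y) (g z) = pv (sd x y) (g z) \<and>
        \<comment> \<open>S12\<close>
        sv (pp x y) (g z) = sv (pv x y) (g z) \<and> sv (pv x y) (g z) = sv (pd x y) (g z) \<and>
        \<comment> \<open>S13\<close>
        sv (sp x y) (g z) = sv (sv x y) (g z) \<and> sv (sv x y) (g z) = sv (sd x y) (g z) \<and>
        \<comment> \<open>S14\<close>
        pd (g x) (pp y z) = pd (g x) (pv y z) \<and> pd (g x) (pv y z) = pd (g x) (pd y z) \<and>
        \<comment> \<open>S15\<close>
        sd (g x) (pp y z) = sd (g x) (pv y z) \<and> sd (g x) (pv y z) = sd (g x) (pd y z) \<and>
        \<comment> \<open>S16\<close>
        sd (g x) (sp y z) = sd (g x) (sv y z) \<and> sd (g x) (sv y z) = sd (g x) (sd y z) \<and>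
        \<comment> \<open>S17\<close>
        pd (g x) (sp y z) = pd (g x) (sv y z) \<and> pd (g x) (sv y z) = pd (g x) (sd y z))"

end

theory Submission
  imports Defs
begin

text \<open>Every operation of the six-dendriform structure is pushed to \<open>D\<close> by \<open>T\<close>:
  \<open>T\<close> intertwines \<open>\<alpha>'\<close> with \<open>\<alpha>\<close> and turns each of the six operations into \<open>\<prec>\<close> or
  \<open>\<succ>\<close> of \<open>D\<close>. Once \<open>T\<close> has been moved inside, every axiom (Q1)--(Q11) becomes an
  axiom of the representation of \<open>D\<close> on \<open>D'\<close>, every axiom (S1)--(S9) becomes an axiom
  of the action, and (S10)--(S17) merely say that \<open>T u \<prec> T v\<close> (resp. \<open>T u \<succ> T v\<close>)
  can be obtained from the three products on \<open>D'\<close> that \<open>T\<close> sends to it.\<close>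

lemma linear_add: "Vector_Spaces.linear s1 s2 f \<Longrightarrow> f (x + y) = f x + f y"
  unfolding Vector_Spaces.linear_iff by blast

lemma bilin_compose_left:
  assumes "bilin s1 s2 s3 f" and "Vector_Spaces.linear s0 s1 T"
  shows "bilin s0 s2 s3 (\<lambda>u v. f (T u) v)"
  using assms Vector_Spaces.linear_compose[OF assms(2)] unfolding bilin_def o_def by blast

lemma bilin_compose_right:
  assumes "bilin s1 s2 s3 f" and "Vector_Spaces.linear s0 s2 T"
  shows "bilin s1 s0 s3 (\<lambda>u v. f u (T v))"
  using assms Vector_Spaces.linear_compose[OF assms(2)] unfolding bilin_def o_def by blast

definition hom_rel_averaging ::
  "('k::field \<Rightarrow> 'd::ab_group_add \<Rightarrow> 'd) \<Rightarrow> ('k \<Rightarrow> 'e::ab_group_add \<Rightarrow> 'e)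
   \<Rightarrow> ('d \<Rightarrow> 'd \<Rightarrow> 'd) \<Rightarrow> ('d \<Rightarrow> 'd \<Rightarrow> 'd) \<Rightarrow> ('d \<Rightarrow> 'd) \<Rightarrow> ('e \<Rightarrow> 'e)
   \<Rightarrow> ('d \<Rightarrow> 'e \<Rightarrow> 'e) \<Rightarrow> ('d \<Rightarrow> 'e \<Rightarrow> 'e) \<Rightarrow> ('e \<Rightarrow> 'd \<Rightarrow> 'e) \<Rightarrow> ('e \<Rightarrow> 'd \<Rightarrow> 'e)
   \<Rightarrow> ('e \<Rightarrow> 'd) \<Rightarrow> bool" where
  "hom_rel_averaging sD sE prec succ alpha beta pl sl pr sr T \<longleftrightarrow>
     Vector_Spaces.linear sE sD T \<and>
     (\<forall>u v.
        prec (T u) (T v) = T (pl (T u) v) \<and> prec (T u) (T v) = T (pr u (T v)) \<and>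
        succ (T u) (T v) = T (sl (T u) v) \<and> succ (T u) (T v) = T (sr u (T v))) \<and>
     (\<forall>u. T (beta u) = alpha (T u))"

lemma hom_rel_avg_op_iff:
  "hom_rel_avg_op sD sE prec succ alpha prec' succ' alpha' pl sl pr sr T \<longleftrightarrow>
     hom_rel_averaging sD sE prec succ alpha alpha' pl sl pr sr T \<and>
     (\<forall>u v. T (prec' u v) = prec (T u) (T v) \<and> T (succ' u v) = succ (T u) (T v))"
  unfolding hom_rel_avg_op_def hom_rel_averaging_def by blast

lemma hom_quadri_dendriform_of_hom_rel_averaging:
  assumes rep: "hom_dend_rep sD sE prec succ alpha pl sl pr sr beta"
    and avg: "hom_rel_averaging sD sE prec succ alpha beta pl sl pr sr T"
  shows "hom_quadri_dendriform sE (\<lambda>u v. pl (T u) v) (\<lambda>u v. pr u (T v))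
           (\<lambda>u v. sl (T u) v) (\<lambda>u v. sr u (T v)) beta"
proof -
  have T_linear: "Vector_Spaces.linear sE sD T"
    and T_avg: "\<And>u v. T (pl (T u) v) = prec (T u) (T v)" "\<And>u v. T (pr u (T v)) = prec (T u) (T v)"
      "\<And>u v. T (sl (T u) v) = succ (T u) (T v)" "\<And>u v. T (sr u (T v)) = succ (T u) (T v)"
    and T_beta: "\<And>u. T (beta u) = alpha (T u)"
    using avg unfolding hom_rel_averaging_def by metis+
  have bilin: "bilin sD sE sE pl" "bilin sD sE sE sl" "bilin sE sD sE pr" "bilin sE sD sE sr"
    and beta_linear: "Vector_Spaces.linear sE sE beta"
    using rep unfolding hom_dend_rep_def by blast+
  show ?thesis
    unfolding hom_quadri_dendriform_def
    using rep beta_linear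
      bilin_compose_left[OF bilin(1) T_linear] bilin_compose_left[OF bilin(2) T_linear]
      bilin_compose_right[OF bilin(3) T_linear] bilin_compose_right[OF bilin(4) T_linear]
    by (simp add: hom_dend_rep_def T_avg T_beta linear_add[OF T_linear])
qed

definition hom_six_compatible ::
  "('e::ab_group_add \<Rightarrow> 'e \<Rightarrow> 'e) \<Rightarrow> ('e \<Rightarrow> 'e \<Rightarrow> 'e) \<Rightarrow> ('e \<Rightarrow> 'e \<Rightarrow> 'e)
   \<Rightarrow> ('e \<Rightarrow> 'e \<Rightarrow> 'e) \<Rightarrow> ('e \<Rightarrow> 'e \<Rightarrow> 'e) \<Rightarrow> ('e \<Rightarrow> 'e \<Rightarrow> 'e) \<Rightarrow> ('e \<Rightarrow> 'e) \<Rightarrow> bool" where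
  "hom_six_compatible pp sp pv pd sv sd g \<longleftrightarrow>
     (\<forall>x y z.
        pp (pv x y) (g z) = pv (g x) (pp y z + sp y z) \<and>
        pp (sv x y) (g z) = sv (g x) (pp y z) \<and>
        sv (g x) (sp y z) = sp (pv x y + sv x y) (g z) \<and>
        pp (pd x y) (g z) = pp (g x) (pv y z + sv y z) \<and>
        pp (sd x y) (g z) = sp (g x) (pv y z) \<and>
        sp (g x) (sv y z) = sp (pd x y + sd x y) (g z) \<and>
        pd (pp x y) (g z) = pp (g x) (pd y z + sd y z) \<and>
        pd (sp x y) (g z) = sp (g x) (pd y z) \<and>
        sp (g x) (sd y z) = sd (pp x y + sp x y) (g z) \<and>
        pv (pp x y) (g z) = pv (pv x y) (g z) \<and> pv (pv x y) (g z) = pv (pd x y) (g z) \<and>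
        pv (sp x y) (g z) = pv (sv x y) (g z) \<and> pv (sv x y) (g z) = pv (sd x y) (g z) \<and>
        sv (pp x y) (g z) = sv (pv x y) (g z) \<and> sv (pv x y) (g z) = sv (pd x y) (g z) \<and>
        sv (sp x y) (g z) = sv (sv x y) (g z) \<and> sv (sv x y) (g z) = sv (sd x y) (g z) \<and>
        pd (g x) (pp y z) = pd (g x) (pv y z) \<and> pd (g x) (pv y z) = pd (g x) (pd y z) \<and>
        sd (g x) (pp y z) = sd (g x) (pv y z) \<and> sd (g x) (pv y z) = sd (g x) (pd y z) \<and>
        sd (g x) (sp y z) = sd (g x) (sv y z) \<and> sd (g x) (sv y z) = sd (g x) (sd y z) \<and>
        pd (g x) (sp y z) = pd (g x) (sv y z) \<and> pd (g x) (sv y z) = pd (g x) (sd y z))"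

lemma hom_six_dendriform_iff:
  "hom_six_dendriform s pp sp pv pd sv sd g \<longleftrightarrow>
     hom_dendriform s pp sp g \<and> hom_quadri_dendriform s pv pd sv sd g \<and>
     hom_six_compatible pp sp pv pd sv sd g"
  unfolding hom_six_dendriform_def hom_six_compatible_def ..

lemma hom_six_compatible_of_hom_rel_avg_op:
  assumes act: "hom_dend_action sD sE prec succ alpha prec' succ' alpha' pl sl pr sr"
    and T: "hom_rel_avg_op sD sE prec succ alpha prec' succ' alpha' pl sl pr sr T"
  shows "hom_six_compatible prec' succ' (\<lambda>u v. pl (T u) v) (\<lambda>u v. pr u (T v))
           (\<lambda>u v. sl (T u) v) (\<lambda>u v. sr u (T v)) alpha'"
proof -
  have T_avg: "\<And>u v. T (pl (T u) v) = prec (T u) (T v)" "\<And>u v. T (pr u (T v)) = prec (T u) (T v)"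
      "\<And>u v. T (sl (T u) v) = succ (T u) (T v)" "\<And>u v. T (sr u (T v)) = succ (T u) (T v)"
    and T_alpha': "\<And>u. T (alpha' u) = alpha (T u)"
    and T_hom: "\<And>u v. T (prec' u v) = prec (T u) (T v)" "\<And>u v. T (succ' u v) = succ (T u) (T v)"
    using T unfolding hom_rel_avg_op_def by metis+
  show ?thesis
    using act unfolding hom_six_compatible_def hom_dend_action_def
    by (simp add: T_avg T_alpha' T_hom)
qed

theorem theorem4p8:
  fixes sD :: "'k::field_char_0 \<Rightarrow> 'd::ab_group_add \<Rightarrow> 'd"
    and sE :: "'k \<Rightarrow> 'e::ab_group_add \<Rightarrow> 'e"
    and prec succ :: "'d \<Rightarrow> 'd \<Rightarrow> 'd" and alpha :: "'d \<Rightarrow> 'd"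
    and prec' succ' :: "'e \<Rightarrow> 'e \<Rightarrow> 'e" and alpha' :: "'e \<Rightarrow> 'e"
    and pl sl :: "'d \<Rightarrow> 'e \<Rightarrow> 'e" and pr sr :: "'e \<Rightarrow> 'd \<Rightarrow> 'e"
    and T :: "'e \<Rightarrow> 'd"
  assumes "vector_space sD" and "vector_space sE"
    and "hom_dendriform sD prec succ alpha"
    and "hom_dendriform sE prec' succ' alpha'"
    and "hom_dend_action sD sE prec succ alpha prec' succ' alpha' pl sl pr sr"
    and "hom_rel_avg_op sD sE prec succ alpha prec' succ' alpha' pl sl pr sr T"
  shows "hom_six_dendriform sE prec' succ'
           (\<lambda>u v. pl (T u) v) (\<lambda>u v. pr u (T v))
           (\<lambda>u v. sl (T u) v) (\<lambda>u v. sr u (T v)) alpha'"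
proof -
  have "hom_dend_rep sD sE prec succ alpha pl sl pr sr alpha'"
    using assms(5) unfolding hom_dend_action_def by blast
  moreover have "hom_rel_averaging sD sE prec succ alpha alpha' pl sl pr sr T"
    using assms(6) unfolding hom_rel_avg_op_iff by blast
  ultimately have "hom_quadri_dendriform sE (\<lambda>u v. pl (T u) v) (\<lambda>u v. pr u (T v))
                     (\<lambda>u v. sl (T u) v) (\<lambda>u v. sr u (T v)) alpha'"
    by (rule hom_quadri_dendriform_of_hom_rel_averaging)
  then show ?thesis
    unfolding hom_six_dendriform_iff
    using assms(4) hom_six_compatible_of_hom_rel_avg_op[OF assms(5,6)] by blast
qed

end
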